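(* Let $\rho_n$ be the number of distinct Manacher arrays of strings of length $n$ (over arbitrary alphabets). Then $\rho_n=\Omega(3^n)$.
   Context: The Manacher array of a string $S$ of length $n$ is the array $\mathsf A[1..2n-1]$ where, for $i=2k-1$, $\mathsf A[i]$ is the largest $r\ge 0$ with $1\le k-r$, $k+r\le n$ and $S[k-r..k+r]$ a palindrome, and for $i=2k$, $\mathsf A[i]$ is the largest $r\ge0$ with $1\le k-r+1$, $k+r\le n$ and $S[k-r+1..k+r]$ a palindrome. *)

theory Defs
  imports Main "HOL-Library.Landau_Symbols"
begin

(* Strings are lists; positions are 1-indexed as in the paper: S[j] = S ! (j - 1).
   is_pal S a b : the factor S[a..b] (empty if b < a) is a palindrome. *)
definition is_pal :: "'a list \<Rightarrow> nat \<Rightarrow> nat \<Rightarrow> bool" where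
  "is_pal S a b \<longleftrightarrow> (\<forall>j. a \<le> j \<and> j \<le> b \<longrightarrow> S ! (j - 1) = S ! (a + b - j - 1))"

definition manacher_entry :: "'a list \<Rightarrow> nat \<Rightarrow> nat" where
  "manacher_entry S i =
     (let n = length S in
      if odd i then
        (let k = (i + 1) div 2 in
         Max {r. 1 + r \<le> k \<and> k + r \<le> n \<and> is_pal S (k - r) (k + r)})
      else
        (let k = i div 2 in
         Max {r. r \<le> k \<and> k + r \<le> n \<and> is_pal S (k + 1 - r) (k + r)}))"

(* The Manacher array A[1..2n-1], stored as a list (list index i-1 holds A[i]) *)
definition manacher :: "'a list \<Rightarrow> nat list" where
  "manacher S = map (manacher_entry S) [1..<2 * length S]"

(* Alphabet: nat
   (a countably infinite alphabet realises every equality pattern, hence every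
   Manacher array of any string over any alphabet). *)
definition rho :: "nat \<Rightarrow> nat" where
  "rho n = card {manacher (S :: nat list) | S. length S = n}"

end

(*
  The Manacher array of S records, for every centre, the radius of the longest palindromic
  factor around it, and palindromes shrink to palindromes around the same centre; so it
  determines exactly which factors S[a..b] are palindromes.  Starting from the word 01, a
  non-constant word P = D w v^k (w \<noteq> v) can be extended by a letter not in P, by v, or
  by w.  Only the second makes the last two letters a palindrome and only the third makes
  the suffix w v^k w one, so the three extensions have different sets of palindromic
  factors.  Induction gives 3^n words of length n + 2 with pairwise different Manacher
  arrays.
*)
theory Submission
  imports Defs
begin

lemma is_pal_shrink:
  assumes "is_pal S a b" "a \<le> a'" "a' + b' = a + b"
  shows "is_pal S a' b'"
  unfolding is_pal_def
proof (intro allI impI)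
  fix j assume "a' \<le> j \<and> j \<le> b'"
  then have "a \<le> j \<and> j \<le> b" using assms(2,3) by linarith
  then show "S ! (j - 1) = S ! (a' + b' - j - 1)" using assms(1,3) unfolding is_pal_def by simp
qed

lemma is_pal_append:
  assumes "1 \<le> a" "b \<le> length L"
  shows "is_pal (L @ R) a b \<longleftrightarrow> is_pal L a b"
proof -
  have "j - 1 < length L" "a + b - j - 1 < length L" if "a \<le> j" "j \<le> b" for j
    using assms that by linarith+
  then show ?thesis unfolding is_pal_def by (auto simp: nth_append)
qed

lemma le_Max_iff_of_down_closed:
  fixes M :: "nat set"
  assumes "finite M" "M \<noteq> {}" "\<And>r s. r \<in> M \<Longrightarrow> s \<le> r \<Longrightarrow> s \<in> M"
  shows "r \<le> Max M \<longleftrightarrow> r \<in> M"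
proof
  assume "r \<le> Max M"
  with assms(3)[OF Max_in[OF assms(1,2)]] show "r \<in> M" .
qed (use assms in simp)

lemma is_pal_suffix_iff:
  "is_pal (D @ F) (Suc (length D)) (length D + length F) \<longleftrightarrow> rev F = F"
proof -
  let ?m = "length D" and ?n = "length F"
  have "is_pal (D @ F) (Suc ?m) (?m + ?n) \<longleftrightarrow> (\<forall>i < ?n. F ! i = F ! (?n - Suc i))"
    unfolding is_pal_def
  proof (intro iffI allI impI)
    fix i assume pal: "\<forall>j. Suc ?m \<le> j \<and> j \<le> ?m + ?n \<longrightarrow>
        (D @ F) ! (j - 1) = (D @ F) ! (Suc ?m + (?m + ?n) - j - 1)" and i: "i < ?n"
    have "Suc ?m + (?m + ?n) - Suc (?m + i) - 1 = ?m + (?n - Suc i)" using i by linarith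
    then have "(D @ F) ! (?m + i) = (D @ F) ! (?m + (?n - Suc i))"
      using pal[rule_format, of "Suc (?m + i)"] i by simp
    then show "F ! i = F ! (?n - Suc i)" by simp
  next
    fix j assume pal: "\<forall>i < ?n. F ! i = F ! (?n - Suc i)" and j: "Suc ?m \<le> j \<and> j \<le> ?m + ?n"
    define i where "i = j - Suc ?m"
    have i: "j = Suc (?m + i)" "i < ?n" using j unfolding i_def by linarith+
    then have "Suc ?m + (?m + ?n) - j - 1 = ?m + (?n - Suc i)" by linarith
    then show "(D @ F) ! (j - 1) = (D @ F) ! (Suc ?m + (?m + ?n) - j - 1)"
      using pal[rule_format, OF i(2)] i(1) by simp
  qed
  also have "\<dots> \<longleftrightarrow> (\<forall>i < ?n. rev F ! i = F ! i)" by (simp add: rev_nth eq_commute)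
  also have "\<dots> \<longleftrightarrow> rev F = F" by (simp add: list_eq_iff_nth_eq)
  finally show ?thesis .
qed

lemma le_manacher_entry_odd_iff:
  assumes "1 \<le> k" "k \<le> length S"
  shows "r \<le> manacher_entry S (2 * k - 1) \<longleftrightarrow>
    r < k \<and> k + r \<le> length S \<and> is_pal S (k - r) (k + r)"
proof -
  let ?M = "{r. 1 + r \<le> k \<and> k + r \<le> length S \<and> is_pal S (k - r) (k + r)}"
  have "manacher_entry S (2 * k - 1) = Max ?M"
    using assms by (simp add: manacher_entry_def Let_def)
  moreover have "r \<le> Max ?M \<longleftrightarrow> r \<in> ?M"
  proof (rule le_Max_iff_of_down_closed)
    show "finite ?M" by (rule finite_subset[of _ "{..length S}"]) auto
    show "?M \<noteq> {}" using assms by (auto simp: is_pal_def intro!: exI[of _ 0])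
  qed (auto intro: is_pal_shrink)
  ultimately show ?thesis by auto
qed

lemma le_manacher_entry_even_iff:
  assumes "k \<le> length S"
  shows "r \<le> manacher_entry S (2 * k) \<longleftrightarrow>
    r \<le> k \<and> k + r \<le> length S \<and> is_pal S (k + 1 - r) (k + r)"
proof -
  let ?M = "{r. r \<le> k \<and> k + r \<le> length S \<and> is_pal S (k + 1 - r) (k + r)}"
  have "manacher_entry S (2 * k) = Max ?M"
    by (simp add: manacher_entry_def Let_def)
  moreover have "r \<le> Max ?M \<longleftrightarrow> r \<in> ?M"
  proof (rule le_Max_iff_of_down_closed)
    show "finite ?M" by (rule finite_subset[of _ "{..length S}"]) auto
    show "?M \<noteq> {}" using assms by (auto simp: is_pal_def intro!: exI[of _ 0])
  qed (auto intro: is_pal_shrink)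
  ultimately show ?thesis by auto
qed

lemma is_pal_iff_le_manacher_entry:
  assumes "1 \<le> a" "a \<le> b" "b \<le> length S"
  shows "is_pal S a b \<longleftrightarrow> (b - a + 1) div 2 \<le> manacher_entry S (a + b - 1)"
proof (cases "even (a + b)")
  case True
  then obtain k where k: "a + b = 2 * k" by blast
  then have "a + b - 1 = 2 * k - 1" "(b - a + 1) div 2 = k - a" "k - (k - a) = a" "k + (k - a) = b"
    using assms(2) by auto
  then show ?thesis using le_manacher_entry_odd_iff[of k S "k - a"] assms k by auto
next
  case False
  then obtain k where k: "a + b = 2 * k + 1" using oddE by blast
  then have "a + b - 1 = 2 * k" "(b - a + 1) div 2 = k + 1 - a" "k + 1 - (k + 1 - a) = a"
    "k + (k + 1 - a) = b" using assms by auto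
  then show ?thesis using le_manacher_entry_even_iff[of k S "k + 1 - a"] assms k by auto
qed

lemma manacher_entry_le_length:
  assumes "i < 2 * length S"
  shows "manacher_entry S i \<le> length S"
proof (cases "even i")
  case True
  then obtain k where "i = 2 * k" by blast
  then show ?thesis using le_manacher_entry_even_iff[of k S "manacher_entry S i"] assms by auto
next
  case False
  then obtain k where "i = 2 * Suc k - 1" by (auto elim!: oddE)
  then show ?thesis using le_manacher_entry_odd_iff[of "Suc k" S "manacher_entry S i"] assms by auto
qed

lemma finite_manacher_arrays: "finite {manacher S | S :: 'a list. length S = n}"
proof (rule finite_subset)
  show "{manacher S | S :: 'a list. length S = n} \<subseteq> {xs. set xs \<subseteq> {..n} \<and> length xs = 2 * n - 1}"
    by (auto simp: manacher_def manacher_entry_le_length)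
qed (rule finite_lists_length_eq, simp)

definition pal_equiv :: "'a list \<Rightarrow> 'b list \<Rightarrow> bool" where
  "pal_equiv S T \<longleftrightarrow> length S = length T \<and>
     (\<forall>a b. 1 \<le> a \<longrightarrow> a \<le> b \<longrightarrow> b \<le> length S \<longrightarrow> is_pal S a b = is_pal T a b)"

lemma manacher_eq_imp_pal_equiv:
  assumes "manacher S = manacher T"
  shows "pal_equiv S T"
proof -
  have "2 * length S - 1 = 2 * length T - 1"
    using arg_cong[OF assms, of length] by (simp add: manacher_def)
  then have len: "length S = length T" by linarith
  have "manacher_entry S i = manacher_entry T i" if "1 \<le> i" "i < 2 * length S" for i
    using nth_map_upt[of "i - 1" "2 * length S" 1] nth_map_upt[of "i - 1" "2 * length T" 1]
      that assms len by (simp add: manacher_def)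
  then show ?thesis
    unfolding pal_equiv_def using len is_pal_iff_le_manacher_entry[of _ _ S]
      is_pal_iff_le_manacher_entry[of _ _ T] by auto
qed

lemma pal_equiv_snocD:
  assumes "pal_equiv (P @ [x]) (Q @ [y])"
  shows "pal_equiv P Q"
proof -
  have len: "length P = length Q" using assms unfolding pal_equiv_def by simp
  have "is_pal P a b = is_pal Q a b" if "1 \<le> a" "a \<le> b" "b \<le> length P" for a b
    using that assms len is_pal_append[of a b P "[x]"] is_pal_append[of a b Q "[y]"]
    unfolding pal_equiv_def by simp
  with len show ?thesis unfolding pal_equiv_def by blast
qed

(* The letter w in P = D w v^k with w \<noteq> v and k maximal; unspecified if P is constant. *)
definition before_last_run :: "'a list \<Rightarrow> 'a" where
  "before_last_run P = hd (dropWhile (\<lambda>x. x = last P) (rev P))"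

lemma before_last_run_split:
  assumes "\<exists>x\<in>set P. x \<noteq> last P"
  shows "\<exists>D R. P = D @ before_last_run P # R \<and> before_last_run P \<noteq> last P \<and> set R \<subseteq> {last P}"
proof -
  let ?v = "last P"
  let ?ys = "dropWhile (\<lambda>x. x = ?v) (rev P)"
  have ne: "?ys \<noteq> []" using assms by simp
  then have ys: "?ys = before_last_run P # tl ?ys" unfolding before_last_run_def by simp
  have "rev P = takeWhile (\<lambda>x. x = ?v) (rev P) @ ?ys" by simp
  then have "P = rev (tl ?ys) @ before_last_run P # rev (takeWhile (\<lambda>x. x = ?v) (rev P))"
    by (metis ys rev_rev_ident rev.simps(2) rev_append append.assoc append_Cons append_Nil)
  moreover have "before_last_run P \<noteq> ?v" using hd_dropWhile[OF ne] unfolding before_last_run_def .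
  moreover have "set (rev (takeWhile (\<lambda>x. x = ?v) (rev P))) \<subseteq> {?v}" by (auto dest: set_takeWhileD)
  ultimately show ?thesis by blast
qed

datatype step = Fresh | Repeat | Mirror

definition next_letter :: "nat list \<Rightarrow> step \<Rightarrow> nat" where
  "next_letter P c = (case c of
     Fresh \<Rightarrow> SOME x. x \<notin> set P
   | Repeat \<Rightarrow> last P
   | Mirror \<Rightarrow> before_last_run P)"

lemma some_notin_set: "(SOME x :: nat. x \<notin> set P) \<notin> set P"
  by (rule someI_ex) (use ex_new_if_finite[OF infinite_UNIV_nat] in blast)

lemma is_pal_last_two_iff:
  assumes "P \<noteq> []"
  shows "is_pal (P @ [x]) (length P) (Suc (length P)) \<longleftrightarrow> x = last P"
proof -
  have "P @ [x] = butlast P @ [last P, x]"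
    using assms by (metis append_butlast_last_id append.assoc append_Cons append_Nil)
  moreover have "is_pal (butlast P @ [last P, x]) (length P) (Suc (length P)) \<longleftrightarrow> x = last P"
    using is_pal_suffix_iff[of "butlast P" "[last P, x]"] assms by auto
  ultimately show ?thesis by (simp only:)
qed

lemma is_pal_across_run_iff:
  assumes "set R \<subseteq> {v}"
  shows "is_pal (D @ w # R @ [x]) (Suc (length D)) (length D + length R + 2) \<longleftrightarrow> x = w"
proof -
  have "R = replicate (length R) v" using assms by (intro replicate_eqI) auto
  then have "rev R = R" by (metis rev_replicate)
  then show ?thesis using is_pal_suffix_iff[of D "w # R @ [x]"] by auto
qed

lemma pal_equiv_snoc_next_letter_imp_eq:
  assumes "\<exists>x\<in>set P. x \<noteq> last P"
    and "pal_equiv (P @ [next_letter P c]) (P @ [next_letter P d])"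
  shows "c = d"
proof -
  define v w where "v = last P" and "w = before_last_run P"
  obtain D R where P: "P = D @ w # R" and "w \<noteq> v" and R: "set R \<subseteq> {v}"
    using before_last_run_split[OF assms(1)] unfolding v_def w_def by blast
  have "P \<noteq> []" "v \<in> set P" "w \<in> set P" using P unfolding v_def by auto
  have same: "is_pal (P @ [next_letter P c]) a b \<longleftrightarrow> is_pal (P @ [next_letter P d]) a b"
    if "1 \<le> a" "a \<le> b" "b \<le> Suc (length P)" for a b
    using assms(2) that unfolding pal_equiv_def by simp
  have "next_letter P c = v \<longleftrightarrow> next_letter P d = v"
    using same[of "length P" "Suc (length P)"] is_pal_last_two_iff[OF \<open>P \<noteq> []\<close>] \<open>P \<noteq> []\<close>
    unfolding v_def by (simp add: Suc_le_eq)
  moreover have "next_letter P c = w \<longleftrightarrow> next_letter P d = w"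
    using same[of "Suc (length D)" "Suc (length P)"] is_pal_across_run_iff[OF R, of D w] P by simp
  moreover have "next_letter P Fresh \<notin> set P" "next_letter P Repeat = v" "next_letter P Mirror = w"
    unfolding next_letter_def v_def w_def using some_notin_set by simp_all
  ultimately show "c = d"
    using \<open>v \<in> set P\<close> \<open>w \<in> set P\<close> \<open>w \<noteq> v\<close> by (cases c; cases d) auto
qed

fun build :: "step list \<Rightarrow> nat list" where
  "build [] = [0, 1]"
| "build (c # cs) = build cs @ [next_letter (build cs) c]"

lemma length_build: "length (build cs) = length cs + 2"
  by (induction cs) simp_all

lemma build_not_constant: "\<exists>x\<in>set (build cs). x \<noteq> last (build cs)"
proof -
  have "\<exists>ys. build cs = 0 # 1 # ys" by (induction cs) auto
  then show ?thesis by (metis insert_iff list.set(2) zero_neq_one)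
qed

lemma build_eq_if_pal_equiv: "pal_equiv (build cs) (build ds) \<Longrightarrow> cs = ds"
proof (induction cs arbitrary: ds)
  case Nil
  then have "length (build ds) = 2" unfolding pal_equiv_def by simp
  then show ?case by (simp add: length_build)
next
  case (Cons c cs)
  then have "length (build ds) = length cs + 3" unfolding pal_equiv_def by (simp add: length_build)
  then obtain d ds' where ds: "ds = d # ds'" by (cases ds) (simp_all add: length_build)
  with Cons.prems
  have snoc: "pal_equiv (build cs @ [next_letter (build cs) c]) (build ds' @ [next_letter (build ds') d])"
    by simp
  then have "cs = ds'" by (rule Cons.IH[OF pal_equiv_snocD])
  with snoc
  have "pal_equiv (build cs @ [next_letter (build cs) c]) (build cs @ [next_letter (build cs) d])"
    by simp
  then have "c = d" by (rule pal_equiv_snoc_next_letter_imp_eq[OF build_not_constant])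
  with \<open>cs = ds'\<close> ds show ?case by simp
qed

lemma three_pow_le_rho: "3 ^ n \<le> rho (n + 2)"
proof -
  let ?C = "{cs. set cs \<subseteq> {Fresh, Repeat, Mirror} \<and> length cs = n}"
  let ?f = "\<lambda>cs. manacher (build cs)"
  have "inj_on ?f ?C"
    by (rule inj_onI) (rule build_eq_if_pal_equiv[OF manacher_eq_imp_pal_equiv])
  then have "card (?f ` ?C) = 3 ^ n"
    by (simp add: card_image card_lists_length_eq numeral_3_eq_3)
  moreover have "?f ` ?C \<subseteq> {manacher S | S :: nat list. length S = n + 2}"
  proof (rule image_subsetI)
    fix cs assume "cs \<in> ?C"
    then have "length (build cs) = n + 2" by (simp add: length_build)
    then show "?f cs \<in> {manacher S | S :: nat list. length S = n + 2}" by blast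
  qed
  then have "card (?f ` ?C) \<le> rho (n + 2)"
    unfolding rho_def by (rule card_mono[OF finite_manacher_arrays])
  ultimately show ?thesis by simp
qed

theorem mainTheorem2:
  shows "(\<lambda>n. real (rho n)) \<in> \<Omega>(\<lambda>n. 3 ^ n)"
proof (rule landau_omega.bigI[of "1 / 9"])
  show "\<forall>\<^sub>F n in at_top. norm (real (rho n)) \<ge> 1 / 9 * norm ((3::real) ^ n)"
  proof (rule eventually_at_top_linorderI)
    fix n :: nat assume "2 \<le> n"
    then obtain m where n: "n = m + 2" using le_Suc_ex add.commute by metis
    have "(3::real) ^ m \<le> real (rho n)"
      using three_pow_le_rho[of m] n by (metis of_nat_le_iff of_nat_numeral of_nat_power)
    then show "norm (real (rho n)) \<ge> 1 / 9 * norm ((3::real) ^ n)" using n by (simp add: power_add)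
  qed
qed simp

end
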